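(* Let $G=(V,R,E)$ be a finite bipartite version–record graph with version tree $\mathbb{T}$ satisfying the standing assumptions below, and let $0<\delta\le1$. Then the algorithm LyreSplit with parameter $\delta$ (described below) outputs a partition of $V$ into blocks $\mathcal{V}_1,\dots,\mathcal{V}_K$ whose storage cost satisfies $\mathcal{S}=\sum_k|\mathcal{R}_k|\le(1+\delta)^{\ell}|R|$ and whose average checkout cost satisfies $\mathcal{C}_{avg}=\frac{1}{|V|}\sum_k|\mathcal{V}_k||\mathcal{R}_k|\le\frac{1}{\delta}\cdot\frac{|E|}{|V|}$; i.e., it is a $((1+\delta)^{\ell},\frac1\delta)$-approximation, where $\ell$ is the recursion level at which the algorithm terminates.
   Context: $(v,r)\in E$ means version $v$ contains record $r$; $R(v)=\{r:(v,r)\in E\}$ and $R=\bigcup_v R(v)$. $\mathbb{T}$ is a rooted tree on $V$ (edges parent$\to$child) with edge weights $w(v_i,v_j)=|R(v_i)\cap R(v_j)|$. Standing assumption (no cross-version diff rule): for every record $r$, the set of versions containing $r$ is a connected subtree of $\mathbb{T}$. For a block $\mathcal{V}_k$, $\mathcal{R}_k=\bigcup_{v\in\mathcal{V}_k}R(v)$. LyreSplit on a subtree with version set $V'$, record set $R'=\bigcup_{v\in V'}R(v)$ and bipartite edge count $|E'|=\sum_{v\in V'}|R(v)|$: if $|R'||V'|<|E'|/\delta$, return $V'$ as a single block; otherwise pick any tree edge $e$ of the subtree with $w(e)\le\delta|R'|$ (such an edge exists), remove it to split the subtree into two subtrees, and recursively apply LyreSplit to each, returning the union of the resulting blocks. The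 initial call on the whole tree is at recursion level $0$, and its recursive calls are at level $1$, etc.; $\ell$ denotes the largest recursion level reached. An algorithm is an $(X,Y)$-approximation if its storage cost is at most $X\cdot|R|$ and its average checkout cost is at most $Y\cdot\frac{|E|}{|V|}$. *)

theory Defs
  imports Complex_Main
begin

text \<open>A version-record bipartite graph is given by
  a finite version set V and the record-set map Rv :: 'v => 'r set, so that
  (v,r) in E iff r in Rv v.  The version tree is a set of directed edges (parent, child).\<close>

definition rooted_tree :: "'v set \<Rightarrow> ('v \<times> 'v) set \<Rightarrow> 'v \<Rightarrow> bool" where
  "rooted_tree V T rt \<longleftrightarrow> finite V \<and> rt \<in> V \<and> T \<subseteq> V \<times> V
     \<and> (\<forall>v\<in>V. (rt, v) \<in> T\<^sup>*) \<and> (\<forall>u. (u, rt) \<notin> T)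
     \<and> (\<forall>v\<in>V - {rt}. \<exists>!u. (u, v) \<in> T)"

definition und_edges :: "('v \<times> 'v) set \<Rightarrow> 'v set \<Rightarrow> ('v \<times> 'v) set" where
  "und_edges T S = {(x, y). x \<in> S \<and> y \<in> S \<and> ((x, y) \<in> T \<or> (y, x) \<in> T)}"

definition connected_in :: "('v \<times> 'v) set \<Rightarrow> 'v set \<Rightarrow> bool" where
  "connected_in T S \<longleftrightarrow> (\<forall>x\<in>S. \<forall>y\<in>S. (x, y) \<in> (und_edges T S)\<^sup>*)"

definition recs :: "('v \<Rightarrow> 'r set) \<Rightarrow> 'v set \<Rightarrow> 'r set" where
  "recs Rv S = (\<Union>v\<in>S. Rv v)"

definition num_edges :: "('v \<Rightarrow> 'r set) \<Rightarrow> 'v set \<Rightarrow> nat" where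
  "num_edges Rv S = (\<Sum>v\<in>S. card (Rv v))"

definition weight :: "('v \<Rightarrow> 'r set) \<Rightarrow> 'v \<Rightarrow> 'v \<Rightarrow> nat" where
  "weight Rv u v = card (Rv u \<inter> Rv v)"

definition side :: "('v \<times> 'v) set \<Rightarrow> 'v set \<Rightarrow> 'v \<Rightarrow> 'v \<Rightarrow> 'v set" where
  "side T S a b = {x \<in> S. (a, x) \<in> (und_edges T S - {(a, b), (b, a)})\<^sup>*}"

text \<open>LyreSplit as a (nondeterministic) relation:
  lyresplit \<delta> T Rv S d B l  means: the call of LyreSplit on the subtree with version set S,
  made at recursion level d, can return the set of blocks B, where l is the largest recursion
  level reached within this call.\<close>
inductive lyresplit :: "real \<Rightarrow> ('v \<times> 'v) set \<Rightarrow> ('v \<Rightarrow> 'r set) \<Rightarrow> 'v set \<Rightarrow> nat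
    \<Rightarrow> 'v set set \<Rightarrow> nat \<Rightarrow> bool" for \<delta> T Rv where
  stop: "real (card (recs Rv S) * card S) < real (num_edges Rv S) / \<delta>
         \<Longrightarrow> lyresplit \<delta> T Rv S d {S} d"
| split: "\<not> real (card (recs Rv S) * card S) < real (num_edges Rv S) / \<delta>
         \<Longrightarrow> (a, b) \<in> T \<Longrightarrow> a \<in> S \<Longrightarrow> b \<in> S
         \<Longrightarrow> real (weight Rv a b) \<le> \<delta> * real (card (recs Rv S))
         \<Longrightarrow> S1 = side T S a b \<Longrightarrow> S2 = S - S1
         \<Longrightarrow> lyresplit \<delta> T Rv S1 (Suc d) B1 l1
         \<Longrightarrow> lyresplit \<delta> T Rv S2 (Suc d) B2 l2
         \<Longrightarrow> lyresplit \<delta> T Rv S d (B1 \<union> B2) (max l1 l2)"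

end

theory Submission
  imports Defs "HOL-Library.Disjoint_Sets"
begin

text \<open>Every split of LyreSplit cuts a connected subtree S along a tree edge (a, b) into the
  descendants of b and the rest. Because each record lives on a connected subtree of versions,
  a record present on both halves must cross the cut edge, so it lies in R(a) \<inter> R(b); the
  split condition w(a, b) \<le> \<delta>|R'| therefore lets the record count grow by at most a factor
  1 + \<delta> per recursion level. Each returned block X satisfies |X||R(X)| < |E(X)|/\<delta>, and the
  edge counts of the blocks add up to |E|.\<close>

definition depth :: "('v \<times> 'v) set \<Rightarrow> 'v \<Rightarrow> 'v \<Rightarrow> nat" where
  "depth T rt x = (LEAST n. (rt, x) \<in> T ^^ n)"

context
  fixes V :: "'v set" and T :: "('v \<times> 'v) set" and rt :: 'v
  assumes tree: "rooted_tree V T rt"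
begin

lemma rooted_tree_parent_unique:
  assumes "(u, v) \<in> T"
  shows "\<exists>!w. (w, v) \<in> T"
proof -
  from tree have "\<forall>v\<in>V - {rt}. \<exists>!u. (u, v) \<in> T" "T \<subseteq> V \<times> V" "\<forall>u. (u, rt) \<notin> T"
    by (simp_all add: rooted_tree_def)
  thus ?thesis using assms by blast
qed

lemma rooted_tree_depth_less:
  assumes uv: "(u, v) \<in> T"
  shows "depth T rt u < depth T rt v"
proof -
  from tree uv have "(rt, v) \<in> T\<^sup>*" and v_not_root: "v \<noteq> rt"
    by (auto simp: rooted_tree_def)
  then obtain n where "(rt, v) \<in> T ^^ n" using rtrancl_power by blast
  hence path: "(rt, v) \<in> T ^^ depth T rt v" unfolding depth_def by (rule LeastI)
  then obtain k where k: "depth T rt v = Suc k"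
    using v_not_root by (cases "depth T rt v") auto
  with path obtain w where "(rt, w) \<in> T ^^ k" and "(w, v) \<in> T" by auto
  moreover have "w = u" using rooted_tree_parent_unique[OF uv] uv \<open>(w, v) \<in> T\<close> by blast
  ultimately have "depth T rt u \<le> k" unfolding depth_def by (auto intro: Least_le)
  thus ?thesis using k by simp
qed

lemma rooted_tree_edge_not_back:
  assumes "(a, b) \<in> T"
  shows "(b, a) \<notin> T\<^sup>*"
proof
  assume "(b, a) \<in> T\<^sup>*"
  hence "depth T rt b \<le> depth T rt a"
    by (induction rule: rtrancl_induct) (auto dest: rooted_tree_depth_less)
  thus False using rooted_tree_depth_less[OF assms] by simp
qed

text \<open>The only tree edge, in either direction, between the descendants of b and the rest
  is (a, b) itself: the parent of a descendant other than b is again a descendant.\<close>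
lemma rooted_tree_edge_into_descendants:
  assumes ab: "(a, b) \<in> T" and uv: "(u, v) \<in> T \<or> (v, u) \<in> T"
    and u: "u \<notin> T\<^sup>* `` {b}" and v: "v \<in> T\<^sup>* `` {b}"
  shows "u = a \<and> v = b"
proof -
  have "(v, u) \<notin> T" using u v by (auto intro: rtrancl_into_rtrancl)
  hence "(u, v) \<in> T" using uv by blast
  note parent_unique = rooted_tree_parent_unique[OF this]
  from v have "(b, v) \<in> T\<^sup>*" by simp
  thus ?thesis
  proof (cases rule: rtranclE)
    case base
    thus ?thesis using parent_unique \<open>(u, v) \<in> T\<close> ab by blast
  next
    case (step w)
    hence "w = u" using parent_unique \<open>(u, v) \<in> T\<close> by blast
    thus ?thesis using step u by simp
  qed
qed

end

lemma und_edges_rtrancl_sym: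
  "(x, y) \<in> (und_edges T S)\<^sup>* \<Longrightarrow> (y, x) \<in> (und_edges T S)\<^sup>*"
proof (induction rule: rtrancl_induct)
  case (step y z)
  hence "(z, y) \<in> und_edges T S" by (auto simp: und_edges_def)
  thus ?case using step.IH by (rule converse_rtrancl_into_rtrancl)
qed simp

lemma connected_inI:
  assumes "\<forall>y\<in>S. (c, y) \<in> (und_edges T S)\<^sup>*"
  shows "connected_in T S"
  unfolding connected_in_def using assms und_edges_rtrancl_sym by (meson rtrancl_trans)

lemma rooted_tree_connected_in:
  assumes "rooted_tree V T rt"
  shows "connected_in T V"
proof (rule connected_inI)
  from assms have "\<forall>y\<in>V. (rt, y) \<in> T\<^sup>*" and "T \<subseteq> und_edges T V"
    by (auto simp: rooted_tree_def und_edges_def)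
  thus "\<forall>y\<in>V. (rt, y) \<in> (und_edges T V)\<^sup>*" using rtrancl_mono by blast
qed

lemma rtrancl_crossing_edge:
  "(x, y) \<in> R\<^sup>* \<Longrightarrow> x \<notin> D \<Longrightarrow> y \<in> D \<Longrightarrow> \<exists>u v. (u, v) \<in> R \<and> u \<notin> D \<and> v \<in> D"
  by (induction rule: rtrancl_induct) auto

text \<open>If all edges entering P from S - P end in c \<in> P, every path from c inside S that ends
  in P can be shortened to one inside S \<inter> P, starting over from its last visit of c.\<close>
lemma connected_in_Int:
  assumes conn: "connected_in T S" and c: "c \<in> S" "c \<in> P"
    and entry: "\<And>u v. (u, v) \<in> und_edges T S \<Longrightarrow> u \<notin> P \<Longrightarrow> v \<in> P \<Longrightarrow> v = c"
  shows "connected_in T (S \<inter> P)"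
proof -
  have "(c, z) \<in> (und_edges T (S \<inter> P))\<^sup>*"
    if "(c, z) \<in> (und_edges T S)\<^sup>*" "z \<in> P" for z
    using that
  proof (induction rule: rtrancl_induct)
    case (step y z)
    show ?case
    proof (cases "y \<in> P")
      case True
      with step have "(y, z) \<in> und_edges T (S \<inter> P)" by (auto simp: und_edges_def)
      thus ?thesis using step True by (meson rtrancl_into_rtrancl)
    next
      case False
      thus ?thesis using entry step by fastforce
    qed
  qed simp
  thus ?thesis using conn c by (intro connected_inI[of _ c]) (auto simp: connected_in_def)
qed

context
  fixes V :: "'v set" and T :: "('v \<times> 'v) set" and rt :: 'v and S :: "'v set" and a b :: 'v
  assumes tree: "rooted_tree V T rt" and ab: "(a, b) \<in> T" and a: "a \<in> S" and b: "b \<in> S"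
    and conn: "connected_in T S"
begin

lemma connected_in_Diff_descendants: "connected_in T (S - T\<^sup>* `` {b})"
proof -
  have "connected_in T (S \<inter> - T\<^sup>* `` {b})"
  proof (rule connected_in_Int[OF conn a])
    show "a \<in> - T\<^sup>* `` {b}" using rooted_tree_edge_not_back[OF tree ab] by simp
    fix u v assume "(u, v) \<in> und_edges T S" "u \<notin> - T\<^sup>* `` {b}" "v \<in> - T\<^sup>* `` {b}"
    thus "v = a"
      using rooted_tree_edge_into_descendants[OF tree ab, of v u] by (auto simp: und_edges_def)
  qed
  thus ?thesis by (simp add: Diff_eq)
qed

lemma connected_in_Int_descendants: "connected_in T (S \<inter> T\<^sup>* `` {b})"
proof (rule connected_in_Int[OF conn b])
  fix u v assume "(u, v) \<in> und_edges T S" "u \<notin> T\<^sup>* `` {b}" "v \<in> T\<^sup>* `` {b}"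
  thus "v = b"
    using rooted_tree_edge_into_descendants[OF tree ab, of u v] by (auto simp: und_edges_def)
qed simp

lemma side_eq_Diff_descendants: "side T S a b = S - T\<^sup>* `` {b}"
proof
  show "side T S a b \<subseteq> S - T\<^sup>* `` {b}"
  proof
    fix x assume "x \<in> side T S a b"
    hence xS: "x \<in> S" and path: "(a, x) \<in> (und_edges T S - {(a, b), (b, a)})\<^sup>*"
      by (auto simp: side_def)
    from path have "x \<notin> T\<^sup>* `` {b}"
    proof (induction rule: rtrancl_induct)
      case base
      show ?case using rooted_tree_edge_not_back[OF tree ab] by simp
    next
      case (step y z)
      from step.hyps(2) have "(y, z) \<in> T \<or> (z, y) \<in> T" and "(y, z) \<noteq> (a, b)"
        by (auto simp: und_edges_def)
      thus ?case using rooted_tree_edge_into_descendants[OF tree ab _ step.IH] by blast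
    qed
    thus "x \<in> S - T\<^sup>* `` {b}" using xS by simp
  qed
next
  show "S - T\<^sup>* `` {b} \<subseteq> side T S a b"
  proof
    fix x assume x: "x \<in> S - T\<^sup>* `` {b}"
    have "a \<in> S - T\<^sup>* `` {b}" using a rooted_tree_edge_not_back[OF tree ab] by simp
    hence "(a, x) \<in> (und_edges T (S - T\<^sup>* `` {b}))\<^sup>*"
      using connected_in_Diff_descendants x by (auto simp: connected_in_def)
    moreover have "und_edges T (S - T\<^sup>* `` {b}) \<subseteq> und_edges T S - {(a, b), (b, a)}"
      by (auto simp: und_edges_def)
    ultimately have "(a, x) \<in> (und_edges T S - {(a, b), (b, a)})\<^sup>*"
      using rtrancl_mono by blast
    thus "x \<in> side T S a b" using x by (auto simp: side_def)
  qed
qed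

lemma connected_in_side: "connected_in T (side T S a b)"
  using connected_in_Diff_descendants by (simp add: side_eq_Diff_descendants)

lemma connected_in_Diff_side: "connected_in T (S - side T S a b)"
  using connected_in_Int_descendants by (simp add: side_eq_Diff_descendants Diff_Diff_Int)

lemma recs_side_Int_subset:
  assumes SV: "S \<subseteq> V"
    and subtree: "\<forall>r\<in>recs Rv V. connected_in T {v \<in> V. r \<in> Rv v}"
  shows "recs Rv (side T S a b) \<inter> recs Rv (S - side T S a b) \<subseteq> Rv a \<inter> Rv b"
proof
  fix r assume "r \<in> recs Rv (side T S a b) \<inter> recs Rv (S - side T S a b)"
  hence "r \<in> recs Rv (S - T\<^sup>* `` {b})" "r \<in> recs Rv (S \<inter> T\<^sup>* `` {b})"
    by (simp_all add: side_eq_Diff_descendants Diff_Diff_Int)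
  then obtain x y where x: "x \<in> S" "x \<notin> T\<^sup>* `` {b}" "r \<in> Rv x"
    and y: "y \<in> S" "y \<in> T\<^sup>* `` {b}" "r \<in> Rv y"
    unfolding recs_def by blast
  define C where "C = {v \<in> V. r \<in> Rv v}"
  have "x \<in> C" "y \<in> C" using x y SV unfolding C_def by auto
  moreover have "connected_in T C"
    using subtree \<open>x \<in> C\<close> unfolding C_def recs_def by blast
  ultimately have "(x, y) \<in> (und_edges T C)\<^sup>*" unfolding connected_in_def by blast
  from rtrancl_crossing_edge[OF this x(2) y(2)] obtain u v
    where uv: "(u, v) \<in> und_edges T C" "u \<notin> T\<^sup>* `` {b}" "v \<in> T\<^sup>* `` {b}"
    by blast
  from uv(1) have "(u, v) \<in> T \<or> (v, u) \<in> T" and "u \<in> C" "v \<in> C"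
    by (auto simp: und_edges_def)
  moreover have "u = a \<and> v = b"
    using rooted_tree_edge_into_descendants[OF tree ab _ uv(2,3)] calculation(1) .
  ultimately show "r \<in> Rv a \<inter> Rv b" unfolding C_def by blast
qed

lemma card_recs_side_add_le:
  assumes SV: "S \<subseteq> V" and finS: "finite S" and finR: "\<forall>v\<in>V. finite (Rv v)"
    and subtree: "\<forall>r\<in>recs Rv V. connected_in T {v \<in> V. r \<in> Rv v}"
  shows "card (recs Rv (side T S a b)) + card (recs Rv (S - side T S a b))
    \<le> card (recs Rv S) + weight Rv a b"
proof -
  let ?R1 = "recs Rv (side T S a b)" and ?R2 = "recs Rv (S - side T S a b)"
  have fin: "finite ?R1" "finite ?R2"
    using finS finR SV by (auto simp: recs_def side_def)
  have "recs Rv S = ?R1 \<union> ?R2" by (auto simp: recs_def side_def)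
  hence "card ?R1 + card ?R2 = card (recs Rv S) + card (?R1 \<inter> ?R2)"
    using card_Un_Int[OF fin] by simp
  moreover have "card (?R1 \<inter> ?R2) \<le> weight Rv a b"
    unfolding weight_def using recs_side_Int_subset[OF SV subtree] finR a SV
    by (intro card_mono) auto
  ultimately show ?thesis by simp
qed

end

lemma partition_on_Un:
  assumes "partition_on A P" "partition_on B Q" "A \<inter> B = {}"
  shows "partition_on (A \<union> B) (P \<union> Q)"
  using assms by (auto simp: partition_on_def intro: disjoint_union)

lemma lyresplit_partition_on:
  "lyresplit \<delta> T Rv S d B l \<Longrightarrow> partition_on S B"
proof (induction rule: lyresplit.induct)
  case (stop S d)
  hence "S \<noteq> {}" by (auto simp: num_edges_def)
  thus ?case by (rule partition_on_space)
next
  case (split S a b S1 S2 d B1 l1 B2 l2)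
  have "partition_on (S1 \<union> S2) (B1 \<union> B2)"
    using split.IH split.hyps(7) by (intro partition_on_Un) auto
  moreover have "S1 \<union> S2 = S" using split.hyps(6,7) by (auto simp: side_def)
  ultimately show ?case by simp
qed

lemma lyresplit_level_le: "lyresplit \<delta> T Rv S d B l \<Longrightarrow> d \<le> l"
  by (induction rule: lyresplit.induct) auto

lemma lyresplit_sum_blocks_Un:
  assumes "lyresplit \<delta> T Rv S1 d1 B1 l1" "lyresplit \<delta> T Rv S2 d2 B2 l2"
    and "S1 \<inter> S2 = {}" "finite S1" "finite S2"
  shows "(\<Sum>X\<in>B1 \<union> B2. f X) = (\<Sum>X\<in>B1. f X) + (\<Sum>X\<in>B2. f X)"
proof (rule sum.union_disjoint)
  note P1 = lyresplit_partition_on[OF assms(1)] and P2 = lyresplit_partition_on[OF assms(2)]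
  show "finite B1" "finite B2" using assms(4,5) P1 P2 by (blast intro: finite_elements)+
  have "X = {}" if "X \<in> B1" "X \<in> B2" for X
  proof -
    have "X \<subseteq> S1" "X \<subseteq> S2"
      using that partition_onD1[OF P1] partition_onD1[OF P2] by blast+
    thus "X = {}" using assms(3) by blast
  qed
  thus "B1 \<inter> B2 = {}" using partition_onD3[OF P1] by blast
qed

lemma lyresplit_checkout_cost:
  "lyresplit \<delta> T Rv S d B l \<Longrightarrow> finite S \<Longrightarrow>
    (\<Sum>X\<in>B. real (card X) * real (card (recs Rv X))) \<le> real (num_edges Rv S) / \<delta>"
proof (induction rule: lyresplit.induct)
  case (stop S d)
  thus ?case by (simp add: mult.commute)
next
  case (split S a b S1 S2 d B1 l1 B2 l2)
  have S12: "S1 \<inter> S2 = {}" "S = S1 \<union> S2" using split.hyps(6,7) by (auto simp: side_def)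
  have fin: "finite S1" "finite S2" using split.prems S12 by auto
  have "(\<Sum>X\<in>B1 \<union> B2. real (card X) * real (card (recs Rv X)))
      = (\<Sum>X\<in>B1. real (card X) * real (card (recs Rv X)))
        + (\<Sum>X\<in>B2. real (card X) * real (card (recs Rv X)))"
    by (rule lyresplit_sum_blocks_Un[OF split.hyps(8,9) S12(1) fin])
  also have "\<dots> \<le> real (num_edges Rv S1) / \<delta> + real (num_edges Rv S2) / \<delta>"
    using split.IH fin by (intro add_mono)
  also have "\<dots> = real (num_edges Rv S) / \<delta>"
  proof -
    have "num_edges Rv S = num_edges Rv S1 + num_edges Rv S2"
      unfolding num_edges_def S12(2) by (rule sum.union_disjoint[OF fin S12(1)])
    thus ?thesis by (simp add: add_divide_distrib)
  qed
  finally show ?case .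
qed

lemma lyresplit_storage_cost:
  assumes run: "lyresplit \<delta> T Rv S d B l"
    and tree: "rooted_tree V T rt" and finV: "finite V" and finR: "\<forall>v\<in>V. finite (Rv v)"
    and subtree: "\<forall>r\<in>recs Rv V. connected_in T {v \<in> V. r \<in> Rv v}"
    and delta: "0 \<le> \<delta>" and SV: "S \<subseteq> V" and conn: "connected_in T S"
  shows "real (\<Sum>X\<in>B. card (recs Rv X)) \<le> (1 + \<delta>) ^ (l - d) * real (card (recs Rv S))"
  using run SV conn
proof (induction rule: lyresplit.induct)
  case (stop S d)
  thus ?case by simp
next
  case (split S a b S1 S2 d B1 l1 B2 l2)
  let ?q = "1 + \<delta>" and ?L = "max l1 l2"
  let ?R = "\<lambda>X. real (card (recs Rv X))"
  have S12: "S1 \<inter> S2 = {}" "S = S1 \<union> S2" using split.hyps(6,7) by (auto simp: side_def)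
  have finS: "finite S" using split.prems(1) finV finite_subset by blast
  have sub: "S1 \<subseteq> V" "S2 \<subseteq> V" using split.prems(1) S12 by auto
  have "connected_in T S1" "connected_in T S2"
    using connected_in_side[OF tree split.hyps(2-4) split.prems(2)]
      connected_in_Diff_side[OF tree split.hyps(2-4) split.prems(2)] split.hyps(6,7) by simp_all
  note IH = split.IH(1)[OF sub(1) this(1)] split.IH(2)[OF sub(2) this(2)]
  have "finite S1" "finite S2" using finS S12 by auto
  hence "real (\<Sum>X\<in>B1 \<union> B2. card (recs Rv X))
      = real (\<Sum>X\<in>B1. card (recs Rv X)) + real (\<Sum>X\<in>B2. card (recs Rv X))"
    using lyresplit_sum_blocks_Un[OF split.hyps(8,9) S12(1)] by simp
  also have "\<dots> \<le> ?q ^ (l1 - Suc d) * ?R S1 + ?q ^ (l2 - Suc d) * ?R S2"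
    using IH by (rule add_mono)
  also have "\<dots> \<le> ?q ^ (?L - Suc d) * ?R S1 + ?q ^ (?L - Suc d) * ?R S2"
    using delta by (intro add_mono mult_right_mono power_increasing) auto
  also have "\<dots> = ?q ^ (?L - Suc d) * (?R S1 + ?R S2)" by (simp add: distrib_left)
  also have "\<dots> \<le> ?q ^ (?L - Suc d) * (?q * ?R S)"
  proof (rule mult_left_mono)
    have "card (recs Rv S1) + card (recs Rv S2) \<le> card (recs Rv S) + weight Rv a b"
      using card_recs_side_add_le[OF tree split.hyps(2-4) split.prems(2,1) finS finR subtree]
        split.hyps(6,7) by simp
    thus "?R S1 + ?R S2 \<le> ?q * ?R S"
      using split.hyps(5) by (simp add: algebra_simps)
  qed (use delta in simp)
  also have "\<dots> = ?q ^ (?L - d) * ?R S"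
  proof -
    have "?L - d = Suc (?L - Suc d)" using lyresplit_level_le[OF split.hyps(9)] by simp
    thus ?thesis by (simp only: power_Suc2 mult.assoc)
  qed
  finally show ?case .
qed

theorem theorem2:
  fixes V :: "'v set" and Rv :: "'v \<Rightarrow> 'r set" and T :: "('v \<times> 'v) set" and rt :: 'v
    and \<delta> :: real and B :: "'v set set" and l :: nat
  assumes finV: "finite V"
    and finR: "\<forall>v\<in>V. finite (Rv v)"
    and tree: "rooted_tree V T rt"
    and subtree: "\<forall>r\<in>recs Rv V. connected_in T {v \<in> V. r \<in> Rv v}"
    and delta: "0 < \<delta>" "\<delta> \<le> 1"
    and run: "lyresplit \<delta> T Rv V 0 B l"
  shows "\<Union>B = V \<and> (\<forall>X\<in>B. X \<noteq> {}) \<and> (\<forall>X\<in>B. \<forall>Y\<in>B. X \<noteq> Y \<longrightarrow> X \<inter> Y = {})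
    \<and> real (\<Sum>X\<in>B. card (recs Rv X)) \<le> (1 + \<delta>) ^ l * real (card (recs Rv V))
    \<and> (1 / real (card V)) * (\<Sum>X\<in>B. real (card X) * real (card (recs Rv X)))
        \<le> (1 / \<delta>) * (real (num_edges Rv V) / real (card V))"
proof -
  have "partition_on V B" using run by (rule lyresplit_partition_on)
  hence partition: "\<Union>B = V \<and> (\<forall>X\<in>B. X \<noteq> {}) \<and> (\<forall>X\<in>B. \<forall>Y\<in>B. X \<noteq> Y \<longrightarrow> X \<inter> Y = {})"
    by (auto simp: partition_on_def disjoint_def)
  have storage: "real (\<Sum>X\<in>B. card (recs Rv X)) \<le> (1 + \<delta>) ^ l * real (card (recs Rv V))"
    using lyresplit_storage_cost[OF run tree finV finR subtree] delta
      rooted_tree_connected_in[OF tree] by simp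
  have "(1 / real (card V)) * (\<Sum>X\<in>B. real (card X) * real (card (recs Rv X)))
      \<le> (1 / real (card V)) * (real (num_edges Rv V) / \<delta>)"
    using lyresplit_checkout_cost[OF run finV] by (intro mult_left_mono) auto
  also have "\<dots> = (1 / \<delta>) * (real (num_edges Rv V) / real (card V))" by simp
  finally show ?thesis using partition storage by blast
qed

end
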